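(* Let $\alpha>0$ and let $X_{1,1},X_{1,2}$ be i.i.d. real random variables such that $$x^{1+2\alpha}\,\mathbb P\big(|X_{1,1}X_{1,2}|\ge\sqrt{x\log x}\big)\to0\quad\text{as }x\to\infty.$$ Then $$\mathbb E\Big(\frac{|X_{1,1}|^{2+4\alpha}}{(1+\log|X_{1,1}|)^{4+4\alpha}}\Big)<\infty.$$
   Context: Here $\log x$ denotes $\ln\max(x,e)$ (so $\log|X_{1,1}|\ge1$). *)

theory Defs
  imports "HOL-Probability.Probability"
begin

text \<open>The paper's convention: log x denotes ln (max x e), so that log x \<ge> 1.\<close>
definition logp :: "real \<Rightarrow> real" where
  "logp x = ln (max x (exp 1))"

end

theory Submission
  imports Defs "HOL-Real_Asymp.Real_Asymp"
begin

text \<open>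
  Cut the range of |X1| into the shells e^k \<le> y \<le> e^(k+1). With \<beta> = 2 + 4\<alpha> the integrand
  is at most e^(\<beta>(k+1)) / (1+k)^(\<beta>+2) on the k-th shell, so it suffices that these weights
  times P(|X1| \<ge> e^k) are summable. By independence P(|X1| \<ge> e^k) P(|X2| \<ge> 1) \<le> P(|X1 X2| \<ge> e^k),
  and for x_k = e^(2k) / 2k one has x_k log x_k \<le> e^(2k), so for large k the hypothesis bounds
  this by x_k^(-\<beta>/2); the k-th term is then O(k^-2). If P(|X2| \<ge> 1) = 0, then, X1 having the
  law of X2, every shell is a null set.
\<close>

lemma logp_ge_1: "logp x \<ge> 1"
  unfolding logp_def by (subst ln_ge_iff) (auto simp: less_max_iff_disj)

lemma logp_mono: "x \<le> y \<Longrightarrow> logp x \<le> logp y"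
  unfolding logp_def by (intro ln_mono) (auto simp: less_max_iff_disj)

lemma logp_eq_ln: "x \<ge> exp 1 \<Longrightarrow> logp x = ln x"
  unfolding logp_def by (simp add: max_def)

lemma ln_le_logp: "x > 0 \<Longrightarrow> ln x \<le> logp x"
  unfolding logp_def by simp

lemma ennreal_le_suminf: "f k \<le> suminf (f :: nat \<Rightarrow> ennreal)"
  using sum_le_suminf[OF summableI, of "{k}" f] by simp

definition shell_bound :: "real \<Rightarrow> nat \<Rightarrow> real" where
  "shell_bound \<beta> k = exp (\<beta> * (real k + 1)) / (1 + real k) powr (\<beta> + 2)"

lemma shell_bound_nonneg: "shell_bound \<beta> k \<ge> 0"
  unfolding shell_bound_def by simp

lemma powr_div_logp_le_1:
  fixes y \<beta> :: real
  assumes "0 \<le> y" "y \<le> 1" "\<beta> > 0"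
  shows "y powr \<beta> / (1 + logp y) powr (\<beta> + 2) \<le> 1"
proof -
  have "y powr \<beta> \<le> 1"
    using assms by (cases "y = 0") (auto intro: powr_le1)
  moreover have "1 \<le> (1 + logp y) powr (\<beta> + 2)"
    using logp_ge_1[of y] assms by (intro ge_one_powr_ge_zero) auto
  ultimately show ?thesis
    by (simp add: divide_le_eq)
qed

lemma powr_div_logp_le_shell_bound:
  fixes y \<beta> :: real
  assumes "exp (real k) \<le> y" "y \<le> exp (real k + 1)" "\<beta> > 0"
  shows "y powr \<beta> / (1 + logp y) powr (\<beta> + 2) \<le> shell_bound \<beta> k"
  unfolding shell_bound_def
proof (rule frac_le)
  have y_pos: "y > 0"
    using exp_gt_zero assms(1) by (rule less_le_trans)
  then have "y powr \<beta> \<le> exp (real k + 1) powr \<beta>"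
    using assms by (intro powr_mono2) auto
  then show "y powr \<beta> \<le> exp (\<beta> * (real k + 1))"
    by (simp add: powr_def mult.commute)
  have "real k \<le> ln y"
    using y_pos assms(1) by (simp add: ln_ge_iff)
  also have "\<dots> \<le> logp y"
    using y_pos by (rule ln_le_logp)
  finally show "(1 + real k) powr (\<beta> + 2) \<le> (1 + logp y) powr (\<beta> + 2)"
    using assms by (intro powr_mono2) auto
  show "0 \<le> exp (\<beta> * (real k + 1))" "0 < (1 + real k) powr (\<beta> + 2)"
    by auto
qed

lemma powr_div_logp_le_shells:
  fixes y \<beta> :: real
  assumes "0 \<le> y" "\<beta> > 0"
  shows "ennreal (y powr \<beta> / (1 + logp y) powr (\<beta> + 2))
    \<le> 1 + (\<Sum>k. ennreal (shell_bound \<beta> k) * indicator {exp (real k)..} y)"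
proof (cases "y \<le> 1")
  case True
  then have "ennreal (y powr \<beta> / (1 + logp y) powr (\<beta> + 2)) \<le> 1"
    using assms powr_div_logp_le_1 by (simp add: ennreal_le_1)
  then show ?thesis
    by (rule order_trans) (simp add: add_increasing2)
next
  case False
  define k where "k = nat \<lfloor>ln y\<rfloor>"
  have "ln y > 0"
    using False by simp
  then have "exp (real k) \<le> exp (ln y)" "exp (ln y) \<le> exp (real k + 1)"
    unfolding k_def exp_le_cancel_iff by linarith+
  then have shell: "exp (real k) \<le> y" "y \<le> exp (real k + 1)"
    using False by simp_all
  have "ennreal (y powr \<beta> / (1 + logp y) powr (\<beta> + 2))
      \<le> ennreal (shell_bound \<beta> k) * indicator {exp (real k)..} y"
    using shell assms powr_div_logp_le_shell_bound by (simp add: ennreal_leI)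
  also have "\<dots> \<le> (\<Sum>k. ennreal (shell_bound \<beta> k) * indicator {exp (real k)..} y)"
    by (rule ennreal_le_suminf)
  finally show ?thesis
    by (rule order_trans) (simp add: add_increasing)
qed

lemma (in prob_space) nn_integral_powr_div_logp_finite:
  fixes X :: "'a \<Rightarrow> real"
  assumes "X \<in> borel_measurable M" "\<beta> > 0"
    and summable: "summable (\<lambda>k. shell_bound \<beta> k * prob {\<omega> \<in> space M. exp (real k) \<le> \<bar>X \<omega>\<bar>})"
  shows "(\<integral>\<^sup>+\<omega>. ennreal (\<bar>X \<omega>\<bar> powr \<beta> / (1 + logp \<bar>X \<omega>\<bar>) powr (\<beta> + 2)) \<partial>M) < \<infinity>"
proof -
  define S where "S k = {\<omega> \<in> space M. exp (real k) \<le> \<bar>X \<omega>\<bar>}" for k :: nat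
  have S: "S k \<in> sets M" for k
    unfolding S_def using assms(1) by measurable
  have "(\<integral>\<^sup>+\<omega>. ennreal (\<bar>X \<omega>\<bar> powr \<beta> / (1 + logp \<bar>X \<omega>\<bar>) powr (\<beta> + 2)) \<partial>M)
      \<le> (\<integral>\<^sup>+\<omega>. 1 + (\<Sum>k. ennreal (shell_bound \<beta> k) * indicator (S k) \<omega>) \<partial>M)"
  proof (rule nn_integral_mono)
    fix \<omega> assume "\<omega> \<in> space M"
    then have "indicator (S k) \<omega> = (indicator {exp (real k)..} \<bar>X \<omega>\<bar> :: ennreal)" for k
      unfolding S_def by (simp add: indicator_def)
    then show "ennreal (\<bar>X \<omega>\<bar> powr \<beta> / (1 + logp \<bar>X \<omega>\<bar>) powr (\<beta> + 2))
        \<le> 1 + (\<Sum>k. ennreal (shell_bound \<beta> k) * indicator (S k) \<omega>)"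
      using powr_div_logp_le_shells[of "\<bar>X \<omega>\<bar>" \<beta>] assms(2) by simp
  qed
  also have "\<dots> = 1 + (\<Sum>k. \<integral>\<^sup>+\<omega>. ennreal (shell_bound \<beta> k) * indicator (S k) \<omega> \<partial>M)"
    using S by (subst nn_integral_add) (auto simp: nn_integral_suminf emeasure_space_1)
  also have "\<dots> = 1 + (\<Sum>k. ennreal (shell_bound \<beta> k * prob (S k)))"
    using S by (simp add: nn_integral_cmult_indicator emeasure_eq_measure ennreal_mult shell_bound_nonneg)
  also have "\<dots> = 1 + ennreal (\<Sum>k. shell_bound \<beta> k * prob (S k))"
    using summable shell_bound_nonneg unfolding S_def by (subst suminf_ennreal2) auto
  also have "\<dots> < \<infinity>"
    by simp
  finally show ?thesis .
qed

lemma (in prob_space) prob_abs_ge_eq_if_distr_eq: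
  fixes X Y :: "'a \<Rightarrow> real"
  assumes "X \<in> borel_measurable M" "Y \<in> borel_measurable M" "distr M borel X = distr M borel Y"
  shows "prob {\<omega> \<in> space M. r \<le> \<bar>X \<omega>\<bar>} = prob {\<omega> \<in> space M. r \<le> \<bar>Y \<omega>\<bar>}"
proof -
  have B: "{t::real. r \<le> \<bar>t\<bar>} \<in> sets borel"
    by measurable
  have "prob {\<omega> \<in> space M. r \<le> \<bar>X \<omega>\<bar>} = measure (distr M borel X) {t. r \<le> \<bar>t\<bar>}"
    using assms(1) B by (subst measure_distr) (auto intro!: arg_cong[where f = prob])
  also have "\<dots> = measure (distr M borel Y) {t. r \<le> \<bar>t\<bar>}"
    using assms(3) by simp
  also have "\<dots> = prob {\<omega> \<in> space M. r \<le> \<bar>Y \<omega>\<bar>}"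
    using assms(2) B by (subst measure_distr) (auto intro!: arg_cong[where f = prob])
  finally show ?thesis .
qed

lemma (in prob_space) prob_abs_ge_mult_le:
  fixes X Y :: "'a \<Rightarrow> real"
  assumes "X \<in> borel_measurable M" "Y \<in> borel_measurable M" "indep_var borel X borel Y"
    and "0 \<le> s" "0 \<le> t"
  shows "prob {\<omega> \<in> space M. s \<le> \<bar>X \<omega>\<bar>} * prob {\<omega> \<in> space M. t \<le> \<bar>Y \<omega>\<bar>}
    \<le> prob {\<omega> \<in> space M. s * t \<le> \<bar>X \<omega> * Y \<omega>\<bar>}"
proof -
  have "prob {\<omega> \<in> space M. s \<le> \<bar>X \<omega>\<bar>} * prob {\<omega> \<in> space M. t \<le> \<bar>Y \<omega>\<bar>}
      = prob {\<omega> \<in> space M. s \<le> \<bar>X \<omega>\<bar> \<and> t \<le> \<bar>Y \<omega>\<bar>}"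
    using prob_indep_random_variable[OF assms(3), of "{x. s \<le> \<bar>x\<bar>}" "{y. t \<le> \<bar>y\<bar>}"] by simp
  also have "\<dots> \<le> prob {\<omega> \<in> space M. s * t \<le> \<bar>X \<omega> * Y \<omega>\<bar>}"
    using assms by (intro finite_measure_mono) (auto simp: abs_mult intro: mult_mono)
  finally show ?thesis .
qed

lemma sqrt_mult_logp_le_exp:
  fixes t :: real
  assumes "t \<ge> 1"
  defines "x \<equiv> exp (2 * t) / (2 * t)"
  shows "sqrt (x * logp x) \<le> exp t"
proof -
  have x_pos: "x > 0"
    using assms by simp
  have "x \<le> exp (2 * t)"
    using assms by (simp add: divide_le_eq)
  then have "logp x \<le> 2 * t"
    using assms logp_mono[of x "exp (2 * t)"] logp_eq_ln[of "exp (2 * t)"] by simp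
  then have "x * logp x \<le> x * (2 * t)"
    using x_pos by (intro mult_left_mono) auto
  also have "\<dots> = (exp t)\<^sup>2"
    using assms by (simp add: power2_eq_square flip: exp_add)
  finally show ?thesis
    by (simp add: real_le_lsqrt)
qed

lemma (in prob_space) prob_abs_ge_exp_mult_le:
  fixes X Y :: "'a \<Rightarrow> real"
  assumes "X \<in> borel_measurable M" "Y \<in> borel_measurable M" "indep_var borel X borel Y"
    and "t \<ge> 1"
  defines "x \<equiv> exp (2 * t) / (2 * t)"
  shows "prob {\<omega> \<in> space M. exp t \<le> \<bar>X \<omega>\<bar>} * prob {\<omega> \<in> space M. 1 \<le> \<bar>Y \<omega>\<bar>}
    \<le> prob {\<omega> \<in> space M. sqrt (x * logp x) \<le> \<bar>X \<omega> * Y \<omega>\<bar>}"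
proof -
  have "prob {\<omega> \<in> space M. exp t \<le> \<bar>X \<omega>\<bar>} * prob {\<omega> \<in> space M. 1 \<le> \<bar>Y \<omega>\<bar>}
      \<le> prob {\<omega> \<in> space M. exp t * 1 \<le> \<bar>X \<omega> * Y \<omega>\<bar>}"
    using assms by (intro prob_abs_ge_mult_le) auto
  also have "\<dots> \<le> prob {\<omega> \<in> space M. sqrt (x * logp x) \<le> \<bar>X \<omega> * Y \<omega>\<bar>}"
    using assms sqrt_mult_logp_le_exp[OF assms(4)]
    by (intro finite_measure_mono) auto
  finally show ?thesis .
qed

lemma summable_shell_bound_mult_tail:
  fixes p :: "real \<Rightarrow> real" and t :: "nat \<Rightarrow> real"
  assumes "\<gamma> > 0" "q > 0" and p: "((\<lambda>x. x powr \<gamma> * p x) \<longlongrightarrow> 0) at_top"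
    and t_nonneg: "\<And>k. 0 \<le> t k"
    and t_le: "\<And>k. k \<ge> 1 \<Longrightarrow> t k * q \<le> p (exp (2 * real k) / (2 * real k))"
  shows "summable (\<lambda>k. shell_bound (2 * \<gamma>) k * t k)"
proof -
  define x where "x k = exp (2 * real k) / (2 * real k)" for k :: nat
  have "filterlim x at_top sequentially"
    unfolding x_def by real_asymp
  with p have "((\<lambda>k. x k powr \<gamma> * p (x k)) \<longlongrightarrow> 0) sequentially"
    by (rule filterlim_compose)
  then have "eventually (\<lambda>k. x k powr \<gamma> * p (x k) < 1) sequentially"
    by (rule order_tendstoD) simp
  then have "eventually (\<lambda>k. norm (shell_bound (2 * \<gamma>) k * t k)
      \<le> shell_bound (2 * \<gamma>) k / x k powr \<gamma> / q) sequentially"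
    using eventually_ge_at_top[of 1]
  proof eventually_elim
    case (elim k)
    have "x k > 0"
      using elim unfolding x_def by simp
    have "t k * q * x k powr \<gamma> \<le> x k powr \<gamma> * p (x k)"
      using mult_right_mono[OF t_le[OF elim(2)], of "x k powr \<gamma>"]
      by (simp add: x_def mult.commute)
    also have "\<dots> \<le> 1"
      using elim(1) by simp
    finally have "t k * q * x k powr \<gamma> \<le> 1" .
    then have "t k \<le> 1 / x k powr \<gamma> / q"
      using \<open>x k > 0\<close> \<open>q > 0\<close> by (simp add: field_simps)
    from mult_left_mono[OF this shell_bound_nonneg] show ?case
      using t_nonneg[of k] shell_bound_nonneg[of "2 * \<gamma>" k] by simp
  qed
  moreover have "summable (\<lambda>k. shell_bound (2 * \<gamma>) k / x k powr \<gamma> / q)"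
  proof (rule summable_divide, rule summable_comparison_test_bigo)
    show "summable (\<lambda>k. norm (real k powr -2))"
      by (simp add: summable_real_powr_iff)
    show "(\<lambda>k. shell_bound (2 * \<gamma>) k / x k powr \<gamma>) \<in> O(\<lambda>k. real k powr -2)"
      unfolding shell_bound_def x_def using \<open>\<gamma> > 0\<close> by real_asymp
  qed
  ultimately show ?thesis
    by (rule summable_comparison_test_ev)
qed

theorem lemma6p4:
  fixes M :: "'a measure" and X1 X2 :: "'a \<Rightarrow> real" and \<alpha> :: real
  assumes "prob_space M"
    and "\<alpha> > 0"
    and "X1 \<in> borel_measurable M" and "X2 \<in> borel_measurable M"
    and "prob_space.indep_var M borel X1 borel X2"
    and "distr M borel X1 = distr M borel X2"
    and "((\<lambda>x. x powr (1 + 2 * \<alpha>) *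
            measure M {\<omega> \<in> space M. \<bar>X1 \<omega> * X2 \<omega>\<bar> \<ge> sqrt (x * logp x)}) \<longlongrightarrow> 0) at_top"
  shows "(\<integral>\<^sup>+ \<omega>. ennreal (\<bar>X1 \<omega>\<bar> powr (2 + 4 * \<alpha>) / (1 + logp \<bar>X1 \<omega>\<bar>) powr (4 + 4 * \<alpha>)) \<partial>M) < \<infinity>"
proof -
  interpret prob_space M by fact
  define tail where "tail k = prob {\<omega> \<in> space M. exp (real k) \<le> \<bar>X1 \<omega>\<bar>}" for k :: nat
  define q where "q = prob {\<omega> \<in> space M. 1 \<le> \<bar>X2 \<omega>\<bar>}"
  have "summable (\<lambda>k. shell_bound (2 * (1 + 2 * \<alpha>)) k * tail k)"
  proof (cases "q = 0")
    case True
    have "tail k \<le> q" for k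
      unfolding tail_def q_def prob_abs_ge_eq_if_distr_eq[OF assms(3,4,6), symmetric]
      using assms(3) by (intro finite_measure_mono) (auto intro: order_trans[rotated])
    with True have "tail k = 0" for k
      by (simp add: tail_def order.antisym)
    then show ?thesis
      by simp
  next
    case False
    then have "q > 0"
      unfolding q_def by (simp add: zero_less_measure_iff)
    show ?thesis
    proof (rule summable_shell_bound_mult_tail[OF _ \<open>q > 0\<close> assms(7)])
      show "1 + 2 * \<alpha> > 0"
        using assms(2) by simp
      show "0 \<le> tail k" for k
        by (simp add: tail_def)
      show "tail k * q \<le> prob {\<omega> \<in> space M. \<bar>X1 \<omega> * X2 \<omega>\<bar> \<ge>
          sqrt (exp (2 * real k) / (2 * real k) * logp (exp (2 * real k) / (2 * real k)))}"
        if "k \<ge> 1" for k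
        unfolding tail_def q_def using that by (intro prob_abs_ge_exp_mult_le assms(3-5)) simp
    qed
  qed
  then show ?thesis
    using nn_integral_powr_div_logp_finite[OF assms(3), of "2 + 4 * \<alpha>"] assms(2)
    by (simp add: tail_def algebra_simps)
qed

end
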